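(* For every integer $g\ge 1$ there exist polynomials $A_g,B_g\in\mathbb{C}[x]$ (with coefficients depending on $T$) such that $$w_{1,0}^{(g)}(x)=\frac{A_g(x)}{y(x)^{3g-2}}+\frac{B_g(x)}{y(x)^{3g-1}},$$ where $\deg A_g\le g-1$, $\deg B_g\le g$, $A_g(-x)=(-1)^{g-1}A_g(x)$, $B_g(-x)=(-1)^{g}B_g(x)$, and the coefficient of $x^{g-1}$ in $A_g$ is the negative of the coefficient of $x^{g}$ in $B_g$.
   Context: Fix $T>0$. Let $y(x)=\sqrt{x^2-4T}$ denote the branch analytic on $\mathbb{C}\setminus[-2\sqrt T,2\sqrt T]$ with $y(x)\sim x$ as $x\to\infty$; write $y_i=y(x_i)$. Let $\hbar$ be a parameter (in the application $\hbar=\sqrt{\kappa}-1/\sqrt{\kappa}$, where $\beta=2\kappa$ is the Dyson index of the Gaussian $\beta$-ensemble $\prod_{i<j}|\lambda_i-\lambda_j|^{2\kappa}e^{-\frac{N\kappa}{T}\sum_i\lambda_i^2/2}$). The functions $W_n^{(g)}(x_1,\dots,x_n)$, $n\ge1$, $g\ge0$ (the coefficients of the large-$N$ expansion of the connected correlators $\langle\sum_{i_1,\dots,i_n}\prod_k (x_k-\lambda_{i_k})^{-1}\rangle_c$ of that ensemble), are the symmetric functions determined recursively as follows: $W_1^{(0)}(x)=\tfrac12(x-y(x))$; by convention $W_n^{(-1)}=W_n^{(-2)}=0$; and for every $(n,g)$ with $n\ge1$, $g\ge0$, $(n,g)\neq(1,0)$, writing $I=(x_1,\dots,x_{n-1})$,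 $$y(x)W_n^{(g)}(x,I)=\hbar\,\partial_xW_n^{(g-1)}(x,I)+W_{n+1}^{(g-2)}(x,x,I)+{\sum_{J\subseteq I}}'\sum_{p=0}^{g}W_{|J|+1}^{(p)}(x,J)\,W_{n-|J|}^{(g-p)}(x,I\setminus J)+\sum_{i=1}^{n-1}\frac{\partial}{\partial x_i}\frac{W_{n-1}^{(g)}(x,I\setminus\{x_i\})-W_{n-1}^{(g)}(I)}{x-x_i},$$ where the primed double sum omits the two terms $(J=\emptyset,p=0)$ and $(J=I,p=g)$, and for $n=1$ the last sum is empty. These functions are rational in the $x_i$ and $y_i$, regular on the diagonals, and each $W_n^{(g)}$ is a polynomial in $\hbar$ of degree at most $g$ containing only powers $\hbar^j$ with $j\equiv g \pmod 2$. For $k\ge1$, $g\ge0$ and $0\le r\le g/2$, $w_{k,2r}^{(g)}(x)$ denotes the coefficient of $\hbar^{g-2r}$ in $W_k^{(g)}(x,\dots,x)$ (all $k$ arguments equal to $x$). Thus $w_{1,0}^{(g)}(x)$ is the coefficient of $\hbar^g$ in $W_1^{(g)}(x)$. *)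

theory Defs
  imports "HOL-Analysis.Analysis"
begin

text \<open>The branch of sqrt(x^2 - 4T) analytic off the cut [-2 sqrt T, 2 sqrt T]
  with y(x) ~ x at infinity (csqrt is the principal branch).\<close>
definition ycut :: "real \<Rightarrow> complex \<Rightarrow> complex" where
  "ycut T x = x * csqrt (1 - 4 * complex_of_real T / x ^ 2)"

definition cut :: "real \<Rightarrow> complex set" where
  "cut T = {complex_of_real t | t. - 2 * sqrt T \<le> t \<and> t \<le> 2 * sqrt T}"

text \<open>Wc T g j (x # I) is the coefficient of hbar^j in W_n^{(g)}(x, I), n = length (x # I),
  defined through the loop equation (valid at generic points: pairwise distinct, off the cut).
  Diagonal values W(x,x,I) are obtained as limits.\<close>
lemma Wc_len_nths:
  assumes "J \<subseteq> {..<length I}"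
  shows "length (nths I J) = card J"
proof -
  have "{i. i < length I \<and> i \<in> J} = J" using assms by auto
  then show ?thesis by (simp add: length_nths)
qed

lemma Wc_len_nths_compl:
  "length (nths I ({..<length I} - J)) = card ({..<length I} - J)"
proof -
  have "{i. i < length I \<and> i \<in> {..<length I} - J} = {..<length I} - J" by auto
  then show ?thesis by (simp add: length_nths)
qed

function Wc :: "real \<Rightarrow> nat \<Rightarrow> nat \<Rightarrow> complex list \<Rightarrow> complex" where
  "Wc T g j [] = 0"
| "Wc T g j (x # I) =
     (if g = 0 \<and> I = [] then (if j = 0 then (x - ycut T x) / 2 else 0)
      else
       ((if 1 \<le> g \<and> 1 \<le> j then deriv (\<lambda>z. Wc T (g - 1) (j - 1) (z # I)) x else 0)
        + (if 2 \<le> g then Lim (at x) (\<lambda>z. Wc T (g - 2) j (z # x # I)) else 0)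
        + (\<Sum>J\<in>Pow {..<length I}. \<Sum>p\<in>{..g}.
             if (J = {} \<and> p = 0) \<or> (J = {..<length I} \<and> p = g) then 0
             else (\<Sum>a\<in>{..j}. Wc T p a (x # nths I J) * Wc T (g - p) (j - a) (x # nths I ({..<length I} - J))))
        + (\<Sum>i<length I. deriv (\<lambda>t. (Wc T g j (x # nths I ({..<length I} - {i})) - Wc T g j (I[i := t])) / (x - t)) (I ! i)))
       / ycut T x)"
  by pat_completeness auto
termination
proof (relation "Wellfounded.measure (\<lambda>(T, g, j, xs). 2 * g + length xs)", goal_cases)
  case 1 then show ?case by simp
next
  case 2 then show ?case by simp
next
  case 3 then show ?case by simp
next
  case (4 T g j x I J p a)
  then have J: "J \<subseteq> {..<length I}" and p: "p \<le> g"
    and ex: "\<not> ((J = {} \<and> p = 0) \<or> (J = {..<length I} \<and> p = g))" by auto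
  have "card J \<le> length I" using J by (metis card_lessThan card_mono finite_lessThan)
  moreover have "card J = length I \<Longrightarrow> J = {..<length I}"
    using J by (metis card_lessThan card_subset_eq finite_lessThan)
  ultimately show ?case
    using p ex Wc_len_nths[OF J] by (cases "p = g") auto
next
  case (5 T g j x I J p a)
  then have J: "J \<subseteq> {..<length I}" and p: "p \<le> g"
    and ex: "\<not> ((J = {} \<and> p = 0) \<or> (J = {..<length I} \<and> p = g))" by auto
  have c: "card ({..<length I} - J) = length I - card J"
    using J by (simp add: card_Diff_subset finite_subset)
  have "J \<noteq> {} \<Longrightarrow> card J > 0" using J by (meson card_gt_0_iff finite_lessThan finite_subset)
  moreover have "card J \<le> length I" using J by (metis card_lessThan card_mono finite_lessThan)
  ultimately have "p = 0 \<Longrightarrow> length (nths I ({..<length I} - J)) < length I"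
    using ex c Wc_len_nths_compl[of I J] by auto
  moreover have "length (nths I ({..<length I} - J)) \<le> length I"
    using c Wc_len_nths_compl[of I J] by simp
  ultimately show ?case
    using p by (cases "p = 0") auto
next
  case (6 T g j x I i)
  then have "i < length I" by simp
  then have "card ({..<length I} - {i}) < length I" by simp
  then show ?case using Wc_len_nths_compl[of I "{i}"] by simp
next
  case 7 then show ?case by simp
qed

definition w10 :: "real \<Rightarrow> nat \<Rightarrow> complex \<Rightarrow> complex" where
  "w10 T g x = Wc T g g [x]"

end

theory Submission
  imports Defs
begin

(*
  Only the top hbar-coefficients enter: since W_n^(g) has hbar-degree at most g,
  the loop equation for n = 1 restricted to the coefficient of hbar^g reduces to the closed
  recursion (with y = y(x))
      y * w_g = w_(g-1)' + sum_(p=1..g-1) w_p * w_(g-p),      w_0 = (x - y) / 2,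
  in which neither the diagonal term W_2^(g-2)(x,x) nor the genus-0 terms survive.
  Using y' = x / y and y^2 = x^2 - 4T, an induction on g shows that
  w_g = A_g / y^(3g-2) + B_g / y^(3g-1), where the new pair (A_g, B_g) is an explicit polynomial
  expression in the earlier pairs.  Along the induction we carry
    - the degree bounds  deg A_g <= g - 1  and  deg (x A_g + B_g) <= g - 1;  the second one
      encodes both deg B_g <= g and the cancellation  [x^(g-1)] A_g = - [x^g] B_g;
    - the parities  A_g(-x) = (-1)^(g-1) A_g(x),  B_g(-x) = (-1)^g B_g(x).
*)

declare Wc.simps(2)[simp del]

section \<open>The recursion for the top coefficient\<close>

lemma Lim_at_zero_fun: "Lim (at (x::complex)) (\<lambda>z. 0::complex) = 0"
  by (rule tendsto_Lim) (auto simp: trivial_limit_at)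

text \<open>The coefficient of hbar^j in W_n^(g) vanishes for j > g: every term of the loop
  equation raises the genus at least as much as the hbar-degree.\<close>
lemma Wc_vanish_above_genus: "j > g \<Longrightarrow> Wc T g j L = 0"
proof (induction T g j L rule: Wc.induct)
  case (1 T g j)
  then show ?case by simp
next
  case (2 T g j x I)
  show ?case
  proof (cases "g = 0 \<and> I = []")
    case True then show ?thesis using 2(7) by (subst Wc.simps(2)) simp
  next
    case False
    have deriv_term: "(if 1 \<le> g \<and> 1 \<le> j then deriv (\<lambda>z. Wc T (g - 1) (j - 1) (z # I)) x else 0) = 0"
      using 2(1)[OF False] 2(7) by auto
    have diagonal_term: "(if 2 \<le> g then Lim (at x) (\<lambda>z. Wc T (g - 2) j (z # x # I)) else 0) = 0"
      using 2(2)[OF False] 2(7) by (auto simp: Lim_at_zero_fun)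
    have product_term: "(\<Sum>J\<in>Pow {..<length I}. \<Sum>p\<le>g.
                 if J = {} \<and> p = 0 \<or> J = {..<length I} \<and> p = g then 0
                 else \<Sum>a\<le>j. Wc T p a (x # nths I J) *
                         Wc T (g - p) (j - a) (x # nths I ({..<length I} - J))) = 0"
    proof (intro sum.neutral ballI)
      fix J p assume J: "J \<in> Pow {..<length I}" and p: "p \<in> {..g}"
      show "(if J = {} \<and> p = 0 \<or> J = {..<length I} \<and> p = g then 0
                 else \<Sum>a\<le>j. Wc T p a (x # nths I J) *
                         Wc T (g - p) (j - a) (x # nths I ({..<length I} - J))) = 0"
      proof (cases "J = {} \<and> p = 0 \<or> J = {..<length I} \<and> p = g")
        case True then show ?thesis by simp
      next
        case nt: False
        have "Wc T p a (x # nths I J) * Wc T (g - p) (j - a) (x # nths I ({..<length I} - J)) = 0"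
          if a: "a \<in> {..j}" for a
        proof (cases "a > p")
          case True then show ?thesis using 2(3)[OF False J p nt a] by simp
        next
          case False
          then have "j - a > g - p" using 2(7) a p by auto
          then show ?thesis using 2(4)[OF \<open>\<not> (g = 0 \<and> I = [])\<close> J p nt a] by simp
        qed
        then show ?thesis using nt by (simp add: sum.neutral)
      qed
    qed
    have insertion_term: "(\<Sum>i<length I. deriv (\<lambda>t. (Wc T g j (x # nths I ({..<length I} - {i})) -
                      Wc T g j (I[i := t])) / (x - t)) (I ! i)) = 0"
      using 2(5)[OF False] 2(6)[OF False] 2(7) by simp
    show ?thesis
      using False deriv_term diagonal_term product_term insertion_term
      by (subst Wc.simps(2)) (simp only: if_False add_0_right add_0_left div_0)
  qed
qed

lemma w10_0: "w10 T 0 = (\<lambda>z. (z - ycut T z) / 2)"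
  by (rule ext) (simp add: w10_def Wc.simps(2))

lemma w10_rec:
  assumes "g \<ge> 1"
  shows "w10 T g x = (deriv (w10 T (g - 1)) x
          + (\<Sum>p\<in>{1..<g}. w10 T p x * w10 T (g - p) x)) / ycut T x"
proof -
  have diagonal_term: "(if 2 \<le> g then Lim (at x) (\<lambda>z. Wc T (g - 2) g [z, x]) else 0) = 0"
    using Wc_vanish_above_genus[of "g - 2" g T] by (auto simp: Lim_at_zero_fun)
  have top_product: "(\<Sum>a\<le>g. Wc T p a [x] * Wc T (g - p) (g - a) [x])
      = w10 T p x * w10 T (g - p) x" if p: "p \<le> g" for p
  proof -
    have "(\<Sum>a\<le>g. Wc T p a [x] * Wc T (g - p) (g - a) [x])
        = (\<Sum>a\<le>g. if a = p then Wc T p a [x] * Wc T (g - p) (g - a) [x] else 0)"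
    proof (rule sum.cong[OF refl])
      fix a assume "a \<in> {..g}"
      then have "a \<noteq> p \<Longrightarrow> a > p \<or> g - a > g - p" using p by auto
      then show "Wc T p a [x] * Wc T (g - p) (g - a) [x]
          = (if a = p then Wc T p a [x] * Wc T (g - p) (g - a) [x] else 0)"
        using Wc_vanish_above_genus[of p a T "[x]"] Wc_vanish_above_genus[of "g - p" "g - a" T "[x]"]
        by auto
    qed
    also have "\<dots> = w10 T p x * w10 T (g - p) x" using p by (simp add: w10_def)
    finally show ?thesis .
  qed
  have product_term: "(\<Sum>p\<le>g. if p = 0 \<or> p = g then 0
             else \<Sum>a\<le>g. Wc T p a [x] * Wc T (g - p) (g - a) [x])
         = (\<Sum>p\<in>{1..<g}. w10 T p x * w10 T (g - p) x)"
  proof -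
    have "(\<Sum>p\<le>g. if p = 0 \<or> p = g then 0
             else \<Sum>a\<le>g. Wc T p a [x] * Wc T (g - p) (g - a) [x])
        = (\<Sum>p\<le>g. if p \<in> {1..<g} then w10 T p x * w10 T (g - p) x else 0)"
      by (rule sum.cong[OF refl]) (auto simp: top_product)
    also have "\<dots> = (\<Sum>p\<in>{1..<g}. w10 T p x * w10 T (g - p) x)"
      by (subst sum.inter_restrict[symmetric]) (auto intro!: sum.cong)
    finally show ?thesis .
  qed
  have Pow_empty_sum: "\<And>F::nat set \<Rightarrow> complex. sum F (Pow {..<0}) = F {}" by simp
  have "w10 T g x = (deriv (\<lambda>z. Wc T (g - 1) (g - 1) [z]) x + 0 +
     (\<Sum>p\<le>g. if p = 0 \<or> p = g then 0
             else \<Sum>a\<le>g. Wc T p a [x] * Wc T (g - p) (g - a) [x]) + 0) / ycut T x"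
    unfolding w10_def using assms diagonal_term
    by (subst Wc.simps(2)) (simp only: list.size Pow_empty_sum nths_nil, simp)
  then show ?thesis
    by (simp add: product_term w10_def[abs_def])
qed

section \<open>The branch y of sqrt(x^2 - 4T) off the cut\<close>

lemma cut_eq: "cut T = complex_of_real ` {- 2 * sqrt T .. 2 * sqrt T}"
  unfolding cut_def by auto

lemma closed_cut: "closed (cut T)"
  unfolding cut_eq
  by (intro compact_imp_closed compact_continuous_image continuous_intros) auto

lemma real_in_cut: "\<bar>a\<bar> \<le> 2 * sqrt T \<Longrightarrow> complex_of_real a \<in> cut T"
  unfolding cut_def by auto

lemma nonzero_off_cut: "T > 0 \<Longrightarrow> x \<notin> cut T \<Longrightarrow> x \<noteq> 0"
  using real_in_cut[of 0 T] by auto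

lemma ycut_square: "x \<noteq> 0 \<Longrightarrow> ycut T x ^ 2 = x ^ 2 - 4 * complex_of_real T"
  unfolding ycut_def by (simp add: power_mult_distrib field_simps)

text \<open>The only zeros of x^2 - 4T, namely x = 2 sqrt T and x = -2 sqrt T, lie on the cut.\<close>
lemma ycut_nonzero:
  assumes "T > 0" "x \<notin> cut T" shows "ycut T x \<noteq> 0"
proof
  assume "ycut T x = 0"
  then have "x ^ 2 = 4 * complex_of_real T"
    using ycut_square[OF nonzero_off_cut[OF assms], of T] by simp
  also have "\<dots> = (complex_of_real (2 * sqrt T)) ^ 2" using assms
    by (simp add: power_mult_distrib flip: of_real_power)
  finally have "x = complex_of_real (2 * sqrt T) \<or> x = - complex_of_real (2 * sqrt T)"
    using power2_eq_iff by blast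
  then show False using assms real_in_cut[of "2 * sqrt T" T] real_in_cut[of "-2 * sqrt T" T]
    by auto
qed

lemma square_pos_real_imp_real:
  fixes x :: complex
  assumes "x ^ 2 = complex_of_real s" "s > 0"
  shows "x = complex_of_real (Re x) \<and> (Re x) ^ 2 = s"
proof -
  have im: "2 * Re x * Im x = 0" and re: "(Re x) ^ 2 - (Im x) ^ 2 = s"
    using arg_cong[OF assms(1), of Im] arg_cong[OF assms(1), of Re]
    by (simp_all add: Im_power2 Re_power2)
  have "Im x = 0"
  proof (rule ccontr)
    assume "Im x \<noteq> 0"
    then have "s + (Im x) ^ 2 = 0" using im re by simp
    then show False using assms(2) by (smt (verit) zero_le_power2)
  qed
  then show ?thesis using re by (simp add: complex_eq_iff)
qed

text \<open>Off the cut, the radicand in the definition of y avoids the branch cut of csqrt,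
  so that y is holomorphic there.\<close>
lemma radicand_off_cut:
  assumes T: "T > 0" and x: "x \<notin> cut T"
  shows "1 - 4 * complex_of_real T / x ^ 2 \<notin> \<real>\<^sub>\<le>\<^sub>0"
proof
  assume "1 - 4 * complex_of_real T / x ^ 2 \<in> \<real>\<^sub>\<le>\<^sub>0"
  then obtain r where r: "r \<le> 0" "1 - 4 * complex_of_real T / x ^ 2 = complex_of_real r"
    by (metis nonpos_Reals_cases)
  have "x \<noteq> 0" using nonzero_off_cut[OF T x] .
  then have "x ^ 2 = complex_of_real (4 * T / (1 - r))"
    using r by (simp add: field_simps)
  moreover have "4 * T / (1 - r) > 0" using T r by simp
  ultimately have x_real: "x = complex_of_real (Re x)" and "(Re x) ^ 2 = 4 * T / (1 - r)"
    using square_pos_real_imp_real by blast+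
  moreover have "4 * T / (1 - r) \<le> (2 * sqrt T) ^ 2"
    using T r by (simp add: power_mult_distrib divide_le_eq)
  ultimately have "\<bar>Re x\<bar> \<le> \<bar>2 * sqrt T\<bar>"
    by (simp only: abs_le_square_iff)
  then have "\<bar>Re x\<bar> \<le> 2 * sqrt T" using T by simp
  then show False using x real_in_cut x_real by metis
qed

lemma ycut_deriv:
  assumes T: "T > 0" and x: "x \<notin> cut T"
  shows "(ycut T has_field_derivative x / ycut T x) (at x)"
proof -
  let ?w = "1 - 4 * complex_of_real T / x ^ 2"
  have x0: "x \<noteq> 0" using nonzero_off_cut[OF T x] .
  have nonpos: "?w \<notin> \<real>\<^sub>\<le>\<^sub>0" using radicand_off_cut[OF T x] .
  then have s0: "csqrt ?w \<noteq> 0" by auto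
  have "((\<lambda>z. 1 - 4 * complex_of_real T / z ^ 2) has_field_derivative 8 * complex_of_real T / x ^ 3) (at x)"
    using x0 by (auto intro!: derivative_eq_intros simp: field_simps power3_eq_cube power2_eq_square)
  from DERIV_mult[OF DERIV_ident has_field_derivative_csqrt'[OF this nonpos]]
  have "(ycut T has_field_derivative
          csqrt ?w + x * ((8 * complex_of_real T / x ^ 3) / (2 * csqrt ?w))) (at x)"
    by (simp add: ycut_def[abs_def] mult.commute)
  moreover have "csqrt ?w * csqrt ?w * x ^ 2 = x ^ 2 - 4 * complex_of_real T"
    using power2_csqrt[of ?w] x0 by (simp add: power2_eq_square field_simps)
  then have "csqrt ?w + x * ((8 * complex_of_real T / x ^ 3) / (2 * csqrt ?w)) = x / ycut T x"
    using s0 x0 unfolding ycut_def by (simp add: field_simps power3_eq_cube power2_eq_square)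
  ultimately show ?thesis by simp
qed

section \<open>Polynomials in x and y\<close>

definition pX :: "complex poly" where "pX = [:0, 1:]"

text \<open>The polynomial x^2 - 4T, equal to y^2 off the cut.\<close>
definition py2 :: "real \<Rightarrow> complex poly" where
  "py2 T = pX * pX - [:4 * complex_of_real T:]"

text \<open>The numerator of the derivative of P / y^k, see lemma deriv_poly_over_ycut_pow.\<close>
definition deriv_numer :: "real \<Rightarrow> nat \<Rightarrow> complex poly \<Rightarrow> complex poly" where
  "deriv_numer T k P = py2 T * pderiv P - of_nat k * (pX * P)"

lemma poly_pX [simp]: "poly pX x = x"
  by (simp add: pX_def)

lemma pderiv_pX: "pderiv pX = 1"
  by (simp add: pX_def pderiv_pCons)

lemma poly_py2_ycut:
  assumes "T > 0" "x \<notin> cut T"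
  shows "poly (py2 T) x = ycut T x ^ 2"
  using ycut_square[OF nonzero_off_cut[OF assms]] by (simp add: py2_def power2_eq_square)

text \<open>Quotient rule together with y' = x / y and y^2 = x^2 - 4T:
  (P / y^k)' = (y^2 P' - k x P) / y^(k+2).\<close>
lemma deriv_poly_over_ycut_pow:
  assumes T: "T > 0" and x: "x \<notin> cut T"
  shows "((\<lambda>z. poly P z / ycut T z ^ k) has_field_derivative
           poly (deriv_numer T k P) x / ycut T x ^ (k + 2)) (at x)"
proof -
  let ?y = "ycut T x"
  have y0: "?y \<noteq> 0" using ycut_nonzero[OF T x] .
  have "((\<lambda>z. poly P z / ycut T z ^ k) has_field_derivative
      (poly (pderiv P) x * ?y ^ k - poly P x * (of_nat k * (x / ?y * ?y ^ (k - Suc 0))))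
        / (?y ^ k * ?y ^ k)) (at x)"
    using y0 by (intro DERIV_divide poly_DERIV DERIV_power ycut_deriv[OF T x]) simp
  moreover have "(poly (pderiv P) x * ?y ^ k - poly P x * (of_nat k * (x / ?y * ?y ^ (k - Suc 0))))
        / (?y ^ k * ?y ^ k) = poly (deriv_numer T k P) x / ?y ^ (k + 2)"
    using y0 poly_py2_ycut[OF T x]
    by (cases k) (auto simp: deriv_numer_def field_simps power2_eq_square)
  ultimately show ?thesis by simp
qed

lemma clear_two_term:
  fixes y w a b :: complex
  assumes "y \<noteq> 0"
  shows "w = a / y ^ e + b / y ^ (e + 1) \<longleftrightarrow> y ^ (e + 1) * w = a * y + b"
  using assms by (auto simp: field_simps)

definition has_parity :: "nat \<Rightarrow> complex poly \<Rightarrow> bool" where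
  "has_parity n P \<longleftrightarrow> (\<forall>x. poly P (- x) = (-1) ^ n * poly P x)"

lemma has_parity_mod2: "has_parity m P \<Longrightarrow> even (m + n) \<Longrightarrow> has_parity n P"
  unfolding has_parity_def by (metis minus_one_power_iff even_add)

lemma has_parity_mult: "has_parity m P \<Longrightarrow> has_parity n Q \<Longrightarrow> has_parity (m + n) (P * Q)"
  by (simp add: has_parity_def power_add)

lemma has_parity_add: "has_parity n P \<Longrightarrow> has_parity n Q \<Longrightarrow> has_parity n (P + Q)"
  by (simp add: has_parity_def algebra_simps)

lemma has_parity_diff: "has_parity n P \<Longrightarrow> has_parity n Q \<Longrightarrow> has_parity n (P - Q)"
  by (simp add: has_parity_def algebra_simps)

lemma has_parity_sum: "(\<And>i. i \<in> S \<Longrightarrow> has_parity n (f i)) \<Longrightarrow> has_parity n (sum f S)"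
  by (simp add: has_parity_def poly_sum sum_distrib_left)

lemma has_parity_of_nat: "has_parity 0 (of_nat k)"
  by (simp add: has_parity_def)

lemma has_parity_pX: "has_parity 1 pX"
  by (simp add: has_parity_def)

lemma has_parity_py2: "has_parity 0 (py2 T)"
  by (simp add: has_parity_def py2_def)

lemma has_parity_pderiv:
  assumes "has_parity n P" shows "has_parity (Suc n) (pderiv P)"
  unfolding has_parity_def
proof
  fix x
  have "P \<circ>\<^sub>p [:0, -1:] = smult ((-1) ^ n) P"
    using assms by (intro poly_eq_poly_eq_iff[THEN iffD1] ext)
                   (simp add: has_parity_def poly_pcompose)
  then have "pderiv (P \<circ>\<^sub>p [:0, -1:]) = smult ((-1) ^ n) (pderiv P)"
    by (simp add: pderiv_smult)
  then have "pderiv P \<circ>\<^sub>p [:0, -1:] * [:-1:] = smult ((-1) ^ n) (pderiv P)"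
    by (simp add: pderiv_pcompose pderiv_pCons)
  then have "poly (pderiv P \<circ>\<^sub>p [:0, -1:] * [:-1:]) x = poly (smult ((-1) ^ n) (pderiv P)) x"
    by simp
  then have "- poly (pderiv P) (- x) = (-1) ^ n * poly (pderiv P) x"
    by (simp add: poly_pcompose)
  then show "poly (pderiv P) (- x) = (-1) ^ Suc n * poly (pderiv P) x"
    by (metis minus_minus power_Suc mult_minus1 mult_minus_left)
qed

lemma degree_mult_le_sum: "degree P \<le> a \<Longrightarrow> degree Q \<le> b \<Longrightarrow> a + b \<le> n \<Longrightarrow> degree (P * Q) \<le> n"
  using degree_mult_le[of P Q] by linarith

lemma degree_pX_mult: "degree (pX * P) \<le> degree P + 1"
  using degree_pCons_le[of 0 P] by (simp add: pX_def)

lemma degree_py2: "degree (py2 T) \<le> 2"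
  unfolding py2_def
  by (intro degree_diff_le degree_mult_le_sum[OF degree_pX_mult degree_pX_mult]) (auto simp: pX_def)

lemma degree_py2_pderiv: "degree (py2 T * pderiv P) \<le> degree P + 1"
proof (cases "degree P = 0")
  case True then show ?thesis by (simp add: pderiv_eq_0_iff[symmetric])
next
  case False
  then show ?thesis
    using degree_mult_le_sum[OF degree_py2[of T] order_refl, of "pderiv P"] by (simp add: degree_pderiv)
qed

lemma degree_from_leading_pair:
  assumes "degree A \<le> n - 1" "degree (pX * A + B) \<le> n - 1" "n \<ge> 1"
  shows "degree B \<le> n"
proof -
  have "degree ((pX * A + B) - pX * A) \<le> n"
    using assms degree_pX_mult[of A] by (intro degree_diff_le) auto
  then show ?thesis by simp
qed

section \<open>The shape of w_g and the analytic induction step\<close>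

definition w10_form :: "real \<Rightarrow> nat \<Rightarrow> complex poly \<Rightarrow> complex poly \<Rightarrow> bool" where
  "w10_form T n A B \<longleftrightarrow> (\<forall>x. x \<notin> cut T \<longrightarrow>
     w10 T n x = poly A x / ycut T x ^ (3 * n - 2) + poly B x / ycut T x ^ (3 * n - 1))"

text \<open>The new pair (A_g, B_g) produced by the recursion from the pairs of genus 1, ..., g-1.
  The derivative of w_(g-1) contributes deriv_numer, the products w_p w_(g-p) contribute the
  sums (using y^2 = x^2 - 4T to reduce the y-degree).\<close>
definition stepA :: "real \<Rightarrow> nat \<Rightarrow> (nat \<Rightarrow> complex poly) \<Rightarrow> (nat \<Rightarrow> complex poly) \<Rightarrow> complex poly" where
  "stepA T g fA fB = deriv_numer T (3 * g - 5) (fA (g - 1))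
     + (\<Sum>p\<in>{1..<g}. fA p * fB (g - p) + fB p * fA (g - p))"

definition stepB :: "real \<Rightarrow> nat \<Rightarrow> (nat \<Rightarrow> complex poly) \<Rightarrow> (nat \<Rightarrow> complex poly) \<Rightarrow> complex poly" where
  "stepB T g fA fB = deriv_numer T (3 * g - 4) (fB (g - 1))
     + (\<Sum>p\<in>{1..<g}. py2 T * fA p * fA (g - p) + fB p * fB (g - p))"

text \<open>Genus one: w_1 = w_0' / y = 1 / (2 y) - x / (2 y^2).\<close>
lemma w10_form_one: "T > 0 \<Longrightarrow> w10_form T 1 [:1/2:] [:0, -1/2:]"
  unfolding w10_form_def
proof (intro allI impI)
  fix x assume T: "T > 0" and x: "x \<notin> cut T"
  have y0: "ycut T x \<noteq> 0" using ycut_nonzero[OF T x] .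
  have "((\<lambda>z. (z - ycut T z) / 2) has_field_derivative (1 - x / ycut T x) / 2) (at x)"
    using DERIV_cdivide[OF DERIV_diff[OF DERIV_ident ycut_deriv[OF T x]], of 2] by simp
  then have "deriv (w10 T 0) x = (1 - x / ycut T x) / 2"
    unfolding w10_0 by (rule DERIV_imp_deriv)
  moreover have "w10 T 1 x = deriv (w10 T 0) x / ycut T x"
    using w10_rec[of 1 T x] by simp
  ultimately have "w10 T 1 x = (1 - x / ycut T x) / 2 / ycut T x" by (simp only:)
  then show "w10 T 1 x = poly [:1/2:] x / ycut T x ^ (3 * 1 - 2)
                         + poly [:0, -1/2:] x / ycut T x ^ (3 * 1 - 1)"
    using y0 by (simp add: field_simps power2_eq_square)
qed

lemma w10_form_cleared:
  assumes T: "T > 0" and x: "x \<notin> cut T" and n: "n \<ge> 1" and form: "w10_form T n A B"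
  shows "ycut T x ^ (3 * n - 1) * w10 T n x = poly A x * ycut T x + poly B x"
proof -
  have e: "3 * n - 1 = 3 * n - 2 + 1" using n by auto
  have "w10 T n x = poly A x / ycut T x ^ (3 * n - 2) + poly B x / ycut T x ^ (3 * n - 2 + 1)"
    using form x unfolding w10_form_def e by blast
  then show ?thesis unfolding e clear_two_term[OF ycut_nonzero[OF T x]] .
qed

lemma w10_form_product:
  assumes T: "T > 0" and x: "x \<notin> cut T" and "p \<ge> 1" "q \<ge> 1"
    and "w10_form T p A B" "w10_form T q C D"
  shows "ycut T x ^ (3 * (p + q) - 2) * (w10 T p x * w10 T q x)
      = poly (A * D + B * C) x * ycut T x + poly (py2 T * A * C + B * D) x"
proof -
  let ?y = "ycut T x"
  have e: "3 * (p + q) - 2 = (3 * p - 1) + (3 * q - 1)" using assms(3,4) by auto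
  have "?y ^ (3 * (p + q) - 2) * (w10 T p x * w10 T q x)
      = (?y ^ (3 * p - 1) * w10 T p x) * (?y ^ (3 * q - 1) * w10 T q x)"
    unfolding e power_add by (simp only: ac_simps)
  also have "\<dots> = (poly A x * ?y + poly B x) * (poly C x * ?y + poly D x)"
    using w10_form_cleared[OF T x] assms(3-6) by simp
  finally show ?thesis
    using poly_py2_ycut[OF T x] by (simp add: algebra_simps power2_eq_square)
qed

lemma w10_form_deriv:
  assumes T: "T > 0" and x: "x \<notin> cut T" and n: "n \<ge> 1" and form: "w10_form T n A B"
  shows "ycut T x ^ (3 * n + 1) * deriv (w10 T n) x
      = poly (deriv_numer T (3 * n - 2) A) x * ycut T x + poly (deriv_numer T (3 * n - 1) B) x"
proof -
  let ?y = "ycut T x"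
  have e: "3 * n - 2 + 2 = 3 * n" "3 * n - 1 + 2 = 3 * n + 1" using n by auto
  have "((\<lambda>z. poly A z / ycut T z ^ (3 * n - 2) + poly B z / ycut T z ^ (3 * n - 1))
          has_field_derivative poly (deriv_numer T (3 * n - 2) A) x / ?y ^ (3 * n)
                               + poly (deriv_numer T (3 * n - 1) B) x / ?y ^ (3 * n + 1)) (at x)"
    using DERIV_add[OF deriv_poly_over_ycut_pow[OF T x, of A "3 * n - 2"]
                       deriv_poly_over_ycut_pow[OF T x, of B "3 * n - 1"]]
    unfolding e(1,2) .
  then have "(w10 T n has_field_derivative poly (deriv_numer T (3 * n - 2) A) x / ?y ^ (3 * n)
                               + poly (deriv_numer T (3 * n - 1) B) x / ?y ^ (3 * n + 1)) (at x)"
    by (rule has_field_derivative_transform_within_open[where S = "- cut T"])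
       (use x closed_cut form in \<open>auto simp: open_Compl w10_form_def\<close>)
  then show ?thesis
    by (subst clear_two_term[OF ycut_nonzero[OF T x], symmetric]) (rule DERIV_imp_deriv)
qed

lemma w10_form_step:
  assumes T: "T > 0" and g: "g \<ge> 2"
    and IH: "\<And>p. p \<in> {1..<g} \<Longrightarrow> w10_form T p (fA p) (fB p)"
  shows "w10_form T g (stepA T g fA fB) (stepB T g fA fB)"
  unfolding w10_form_def
proof (intro allI impI)
  fix x assume x: "x \<notin> cut T"
  define y where "y = ycut T x"
  have e: "3 * (g - 1) + 1 = 3 * g - 2" "3 * (g - 1) - 2 = 3 * g - 5" "3 * (g - 1) - 1 = 3 * g - 4"
    "3 * g - 1 = 3 * g - 2 + 1" and g1: "g - 1 \<in> {1..<g}" "1 \<le> g - 1" using g by auto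
  have deriv_cleared: "y ^ (3 * g - 2) * deriv (w10 T (g - 1)) x
      = poly (deriv_numer T (3 * g - 5) (fA (g - 1))) x * y + poly (deriv_numer T (3 * g - 4) (fB (g - 1))) x"
    using w10_form_deriv[OF T x g1(2) IH[OF g1(1)]] unfolding e(1-3) y_def .
  have "y ^ (3 * g - 2) * (w10 T p x * w10 T (g - p) x)
      = poly (fA p * fB (g - p) + fB p * fA (g - p)) x * y
        + poly (py2 T * fA p * fA (g - p) + fB p * fB (g - p)) x" if p: "p \<in> {1..<g}" for p
  proof -
    have "1 \<le> p" "1 \<le> g - p" "g - p \<in> {1..<g}" "p + (g - p) = g" using p by auto
    then show ?thesis
      using w10_form_product[OF T x _ _ IH[OF p] IH[of "g - p"]] unfolding y_def by simp
  qed
  then have "y ^ (3 * g - 2) * (\<Sum>p\<in>{1..<g}. w10 T p x * w10 T (g - p) x)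
      = (\<Sum>p\<in>{1..<g}. poly (fA p * fB (g - p) + fB p * fA (g - p)) x * y
                       + poly (py2 T * fA p * fA (g - p) + fB p * fB (g - p)) x)"
    unfolding sum_distrib_left by (rule sum.cong[OF refl])
  then have sum_cleared: "y ^ (3 * g - 2) * (\<Sum>p\<in>{1..<g}. w10 T p x * w10 T (g - p) x)
      = poly (\<Sum>p\<in>{1..<g}. fA p * fB (g - p) + fB p * fA (g - p)) x * y
        + poly (\<Sum>p\<in>{1..<g}. py2 T * fA p * fA (g - p) + fB p * fB (g - p)) x"
    unfolding poly_sum sum_distrib_right sum.distrib[symmetric] .
  have "y ^ (3 * g - 2 + 1) * w10 T g x
      = y ^ (3 * g - 2) * (deriv (w10 T (g - 1)) x + (\<Sum>p\<in>{1..<g}. w10 T p x * w10 T (g - p) x))"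
    using w10_rec[of g T x] g ycut_nonzero[OF T x] by (simp add: y_def)
  also have "\<dots> = y ^ (3 * g - 2) * deriv (w10 T (g - 1)) x
                   + y ^ (3 * g - 2) * (\<Sum>p\<in>{1..<g}. w10 T p x * w10 T (g - p) x)"
    by (rule distrib_left)
  also have "\<dots> = poly (stepA T g fA fB) x * y + poly (stepB T g fA fB) x"
    unfolding deriv_cleared sum_cleared stepA_def stepB_def poly_add by (simp add: algebra_simps)
  finally show "w10 T g x = poly (stepA T g fA fB) x / ycut T x ^ (3 * g - 2)
                              + poly (stepB T g fA fB) x / ycut T x ^ (3 * g - 1)"
    unfolding e(4) clear_two_term[OF ycut_nonzero[OF T x]] y_def .
qed

text \<open>The degree bounds carried through the induction.  The bound on x A + B encodes
  deg B \<le> n together with the cancellation of the top coefficients of x A and B.\<close>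
definition degree_bounds :: "nat \<Rightarrow> complex poly \<Rightarrow> complex poly \<Rightarrow> bool" where
  "degree_bounds n A B \<longleftrightarrow> degree A \<le> n - 1 \<and> degree (pX * A + B) \<le> n - 1"

text \<open>The combination x A_g + B_g of the new pair, rewritten in terms of x A_p + B_p and A_p
  only; in this form the bound g - 1 on its degree becomes visible term by term.\<close>
lemma leading_combination_step:
  assumes "g \<ge> 2"
  shows "pX * stepA T g fA fB + stepB T g fA fB
     = py2 T * pderiv (pX * fA (g - 1) + fB (g - 1)) + [:4 * complex_of_real T:] * fA (g - 1)
       - of_nat (3 * g - 4) * (pX * (pX * fA (g - 1) + fB (g - 1)))
       + (\<Sum>p\<in>{1..<g}. (pX * fA p + fB p) * (pX * fA (g - p) + fB (g - p))
                        - [:4 * complex_of_real T:] * (fA p * fA (g - p)))"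
proof -
  have k: "3 * g - 4 = (3 * g - 5) + 1" using assms by simp
  have products: "pX * (\<Sum>p\<in>{1..<g}. fA p * fB (g - p) + fB p * fA (g - p))
       + (\<Sum>p\<in>{1..<g}. py2 T * fA p * fA (g - p) + fB p * fB (g - p))
     = (\<Sum>p\<in>{1..<g}. (pX * fA p + fB p) * (pX * fA (g - p) + fB (g - p))
                        - [:4 * complex_of_real T:] * (fA p * fA (g - p)))"
    unfolding sum_distrib_left sum.distrib[symmetric]
    by (rule sum.cong[OF refl]) (simp add: py2_def algebra_simps)
  show ?thesis
    unfolding stepA_def stepB_def k products[symmetric]
    by (simp add: deriv_numer_def py2_def pderiv_add pderiv_mult pderiv_pX smult_add_right
                  algebra_simps)
qed

lemma degree_bounds_unfold:
  assumes "degree_bounds p A B" "p \<ge> 1"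
  shows "degree A \<le> p - 1" "degree (pX * A + B) \<le> p - 1" "degree B \<le> p"
  using assms degree_from_leading_pair[of A p B] unfolding degree_bounds_def by auto

lemma degree_stepA:
  assumes g: "g \<ge> 2" and IH: "\<And>p. p \<in> {1..<g} \<Longrightarrow> degree_bounds p (fA p) (fB p)"
  shows "degree (stepA T g fA fB) \<le> g - 1"
  unfolding stepA_def deriv_numer_def
proof (intro degree_add_le degree_diff_le degree_sum_le finite_atLeastLessThan)
  have g1: "g - 1 \<in> {1..<g}" "1 \<le> g - 1" "g - 1 - 1 = g - 2" using g by auto
  have "degree (fA (g - 1)) \<le> g - 2"
    using degree_bounds_unfold(1)[OF IH[OF g1(1)] g1(2)] unfolding g1(3) .
  then show "degree (py2 T * pderiv (fA (g - 1))) \<le> g - 1"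
    and "degree (of_nat (3 * g - 5) * (pX * fA (g - 1))) \<le> g - 1"
    using degree_py2_pderiv[of T "fA (g - 1)"] degree_pX_mult[of "fA (g - 1)"] g
    by (linarith,
        intro degree_mult_le_sum[OF eq_imp_le[OF degree_of_nat], of _ "g - 1"], linarith+)
  fix p assume p: "p \<in> {1..<g}"
  note bounds_p = degree_bounds_unfold[OF IH[OF p]] and bounds_q = degree_bounds_unfold[OF IH[of "g - p"]]
  show "degree (fA p * fB (g - p)) \<le> g - 1"
    using bounds_p(1) bounds_q(3) p by (intro degree_mult_le_sum[of _ "p - 1" _ "g - p"]) auto
  show "degree (fB p * fA (g - p)) \<le> g - 1"
    using bounds_p(3) bounds_q(1) p by (intro degree_mult_le_sum[of _ p _ "g - p - 1"]) auto
qed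

lemma degree_leading_combination:
  assumes g: "g \<ge> 2" and IH: "\<And>p. p \<in> {1..<g} \<Longrightarrow> degree_bounds p (fA p) (fB p)"
  shows "degree (pX * stepA T g fA fB + stepB T g fA fB) \<le> g - 1"
  unfolding leading_combination_step[OF g]
proof (intro degree_add_le degree_diff_le degree_sum_le finite_atLeastLessThan)
  let ?C = "pX * fA (g - 1) + fB (g - 1)"
  have g1: "g - 1 \<in> {1..<g}" "1 \<le> g - 1" "g - 1 - 1 = g - 2" using g by auto
  have dA: "degree (fA (g - 1)) \<le> g - 2" and dC: "degree ?C \<le> g - 2"
    using degree_bounds_unfold(1,2)[OF IH[OF g1(1)] g1(2)] unfolding g1(3) by auto
  show "degree (py2 T * pderiv ?C) \<le> g - 1"
    using degree_py2_pderiv[of T ?C] dC g by linarith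
  show "degree ([:4 * complex_of_real T:] * fA (g - 1)) \<le> g - 1"
    using dA g by (intro degree_mult_le_sum[of _ 0 _ "g - 2"]) auto
  show "degree (of_nat (3 * g - 4) * (pX * ?C)) \<le> g - 1"
    using degree_pX_mult[of ?C] dC g
    by (intro degree_mult_le_sum[OF eq_imp_le[OF degree_of_nat], of _ "g - 1"]) linarith+
  fix p assume p: "p \<in> {1..<g}"
  note bounds_p = degree_bounds_unfold[OF IH[OF p]] and bounds_q = degree_bounds_unfold[OF IH[of "g - p"]]
  show "degree ((pX * fA p + fB p) * (pX * fA (g - p) + fB (g - p))) \<le> g - 1"
    using bounds_p(2) bounds_q(2) p by (intro degree_mult_le_sum[of _ "p - 1" _ "g - p - 1"]) auto
  show "degree ([:4 * complex_of_real T:] * (fA p * fA (g - p))) \<le> g - 1"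
    using bounds_p(1) bounds_q(1) p
    by (intro degree_mult_le_sum[of _ 0 _ "g - 1"] degree_mult_le_sum[of _ "p - 1" _ "g - p - 1"]) auto
qed

definition parities :: "nat \<Rightarrow> complex poly \<Rightarrow> complex poly \<Rightarrow> bool" where
  "parities n A B \<longleftrightarrow> has_parity (n - 1) A \<and> has_parity n B"

text \<open>Each summand of A_g has total parity g - 1: x and the derivative flip the parity, y^2 keeps it,
  and a product adds parities.\<close>
lemma has_parity_stepA:
  assumes g: "g \<ge> 2" and IH: "\<And>p. p \<in> {1..<g} \<Longrightarrow> parities p (fA p) (fB p)"
  shows "has_parity (g - 1) (stepA T g fA fB)"
  unfolding stepA_def deriv_numer_def
proof (intro has_parity_add has_parity_diff has_parity_sum)
  have pA: "has_parity (g - 2) (fA (g - 1))"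
    using IH[of "g - 1"] g unfolding parities_def by (simp add: numeral_2_eq_2)
  show "has_parity (g - 1) (py2 T * pderiv (fA (g - 1)))"
    using has_parity_mult[OF has_parity_py2 has_parity_pderiv[OF pA]]
    by (rule has_parity_mod2) (use g in presburger)
  show "has_parity (g - 1) (of_nat (3 * g - 5) * (pX * fA (g - 1)))"
    using has_parity_mult[OF has_parity_of_nat has_parity_mult[OF has_parity_pX pA]]
    by (rule has_parity_mod2) (use g in presburger)
  fix p assume p: "p \<in> {1..<g}"
  then have "p \<ge> 1" "p < g" by auto
  have "parities p (fA p) (fB p)" "parities (g - p) (fA (g - p)) (fB (g - p))"
    using IH p by auto
  then have pp: "has_parity (p - 1) (fA p)" "has_parity p (fB p)"
    and pq: "has_parity (g - p - 1) (fA (g - p))" "has_parity (g - p) (fB (g - p))"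
    unfolding parities_def by auto
  show "has_parity (g - 1) (fA p * fB (g - p))"
    using has_parity_mult[OF pp(1) pq(2)]
    by (rule has_parity_mod2) (use \<open>p \<ge> 1\<close> \<open>p < g\<close> in presburger)
  show "has_parity (g - 1) (fB p * fA (g - p))"
    using has_parity_mult[OF pp(2) pq(1)]
    by (rule has_parity_mod2) (use \<open>p \<ge> 1\<close> \<open>p < g\<close> in presburger)
qed

lemma has_parity_stepB:
  assumes g: "g \<ge> 2" and IH: "\<And>p. p \<in> {1..<g} \<Longrightarrow> parities p (fA p) (fB p)"
  shows "has_parity g (stepB T g fA fB)"
  unfolding stepB_def deriv_numer_def
proof (intro has_parity_add has_parity_diff has_parity_sum)
  have pB: "has_parity (g - 1) (fB (g - 1))"
    using IH[of "g - 1"] g unfolding parities_def by simp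
  show "has_parity g (py2 T * pderiv (fB (g - 1)))"
    using has_parity_mult[OF has_parity_py2 has_parity_pderiv[OF pB]]
    by (rule has_parity_mod2) (use g in presburger)
  show "has_parity g (of_nat (3 * g - 4) * (pX * fB (g - 1)))"
    using has_parity_mult[OF has_parity_of_nat has_parity_mult[OF has_parity_pX pB]]
    by (rule has_parity_mod2) (use g in presburger)
  fix p assume p: "p \<in> {1..<g}"
  then have "p \<ge> 1" "p < g" by auto
  have "parities p (fA p) (fB p)" "parities (g - p) (fA (g - p)) (fB (g - p))"
    using IH p by auto
  then have pp: "has_parity (p - 1) (fA p)" "has_parity p (fB p)"
    and pq: "has_parity (g - p - 1) (fA (g - p))" "has_parity (g - p) (fB (g - p))"
    unfolding parities_def by auto
  show "has_parity g (py2 T * fA p * fA (g - p))"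
    using has_parity_mult[OF has_parity_mult[OF has_parity_py2 pp(1)] pq(1)]
    by (rule has_parity_mod2) (use \<open>p \<ge> 1\<close> \<open>p < g\<close> in presburger)
  show "has_parity g (fB p * fB (g - p))"
    using has_parity_mult[OF pp(2) pq(2)]
    by (rule has_parity_mod2) (use \<open>p \<ge> 1\<close> \<open>p < g\<close> in presburger)
qed

section \<open>The induction on the genus and the main theorem\<close>

definition w10_shape :: "real \<Rightarrow> nat \<Rightarrow> complex poly \<Rightarrow> complex poly \<Rightarrow> bool" where
  "w10_shape T n A B \<longleftrightarrow> degree_bounds n A B \<and> parities n A B \<and> w10_form T n A B"

lemma w10_shape_exists:
  assumes T: "T > 0"
  shows "g \<ge> 1 \<Longrightarrow> \<exists>A B. w10_shape T g A B"
proof (induction g rule: less_induct)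
  case (less g)
  show ?case
  proof (cases "g = 1")
    case True
    have "degree_bounds 1 [:1/2:] [:0, -1/2:]" "parities 1 [:1/2:] [:0, -1/2:]"
      by (simp_all add: degree_bounds_def parities_def has_parity_def pX_def)
    then show ?thesis using True w10_form_one[OF T] unfolding w10_shape_def by blast
  next
    case False
    then have g: "g \<ge> 2" using less.prems by simp
    have "\<forall>p\<in>{1..<g}. \<exists>AB. w10_shape T p (fst AB) (snd AB)" using less.IH by fastforce
    then obtain f where "\<And>p. p \<in> {1..<g} \<Longrightarrow> w10_shape T p (fst (f p)) (snd (f p))"
      by (metis bchoice)
    then have "w10_shape T g (stepA T g (fst \<circ> f) (snd \<circ> f)) (stepB T g (fst \<circ> f) (snd \<circ> f))"
      unfolding w10_shape_def degree_bounds_def parities_def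
      by (intro conjI degree_stepA degree_leading_combination has_parity_stepA has_parity_stepB
                w10_form_step T g) (auto simp: w10_shape_def degree_bounds_def parities_def)
    then show ?thesis by blast
  qed
qed

theorem theorem1:
  fixes T :: real and g :: nat
  assumes "T > 0" and "g \<ge> 1"
  shows "\<exists>A B :: complex poly.
           degree A \<le> g - 1 \<and> degree B \<le> g \<and>
           (\<forall>x. poly A (- x) = (-1) ^ (g - 1) * poly A x) \<and>
           (\<forall>x. poly B (- x) = (-1) ^ g * poly B x) \<and>
           coeff A (g - 1) = - coeff B g \<and>
           (\<forall>x. x \<notin> cut T \<longrightarrow>
              w10 T g x = poly A x / ycut T x ^ (3 * g - 2) + poly B x / ycut T x ^ (3 * g - 1))"
proof -
  obtain A B where "w10_shape T g A B" using w10_shape_exists[OF assms] by blast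
  then have dA: "degree A \<le> g - 1" and dC: "degree (pX * A + B) \<le> g - 1"
    and par: "parities g A B" and form: "w10_form T g A B"
    unfolding w10_shape_def degree_bounds_def by auto
  have "coeff (pX * A + B) g = 0" using dC assms(2) by (intro coeff_eq_0) linarith
  moreover have "coeff (pX * A) g = coeff A (g - 1)"
    using assms(2) by (cases g) (simp_all add: pX_def)
  ultimately have "coeff A (g - 1) = - coeff B g" by (simp add: eq_neg_iff_add_eq_0)
  then show ?thesis
    using dA degree_from_leading_pair[OF dA dC assms(2)] par form
    unfolding parities_def has_parity_def w10_form_def by blast
qed

end
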